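(* For any $n\geq 1$ and any group $\mathsf{G}$, there is a strict isomorphism of 2-groups $\mathsf{S}_n\wr\wr\ \mathbb{S}ym(\mathsf{G})\to\mathbb{S}ym\big(\coprod^n\mathsf{G}\big)$, where $\coprod^n\mathsf G$ is the coproduct of $n$ copies of the one-object groupoid $\mathsf G$. Explicitly, writing the objects of $\coprod^n\mathsf G$ as $\ast_1,\dots,\ast_n$, it sends an object $(\sigma,(\phi_1,\dots,\phi_n))$ ($\sigma\in\mathsf S_n$, $\phi_i\in\mathrm{Aut}(\mathsf G)$) to the self-equivalence $(g,\ast_i)\mapsto(\phi_i(g),\ast_{\sigma(i)})$ and a morphism given by $(g_1,\dots,g_n)$ to the natural isomorphism with components $(g_i,\ast_{\sigma(i)})$.
   Context: A 2-group is a monoidal groupoid in which every object has a weak tensor inverse; a strict isomorphism of 2-groups is an isomorphism of the underlying groupoids strictly preserving the tensor product and unit. For a groupoid $\mathcal K$, $\mathbb{S}ym(\mathcal K)$ is the 2-group of self-equivalences of $\mathcal K$ and natural isomorphisms, with tensor given by composition. For a group $\mathsf G$ (one-object groupoid), $\mathbb{S}ym(\mathsf G)$ is (isomorphic to) the strict 2-group with objects the automorphisms $\phi$ of $\mathsf G$, morphisms $\phi\to\tilde\phi$ the elements $g\in\mathsf G$ with $\tilde\phi=c_g\circ\phi$ ($c_g$ conjugation by $g$), composition $\tilde g\circ g=\tilde g g$, tensor $\phi\otimes\phi'=\phi\circ\phi'$ and $g\otimes g'=g\,\phi(g')$ for $g:\phi\to\tilde\phi$, $g':\phi'\to\tilde\phi'$.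 For a 2-group $\mathbb G$, $\mathsf{S}_n\wr\wr\ \mathbb{G}$ is the 2-group with objects $(\sigma,\mathbf x)$, $\sigma\in\mathsf S_n$, $\mathbf x$ an $n$-tuple of objects of $\mathbb G$; morphisms $(\sigma,\mathbf x)\to(\sigma,\mathbf x')$ are $n$-tuples of morphisms $x_i\to x'_i$ (none if the permutations differ); tensor $(\sigma,\mathbf{x})\otimes(\sigma',\mathbf{x}')=(\sigma\sigma',(\mathbf{x}\rhd\sigma')\otimes\mathbf{x}')$ and analogously on morphisms, with $\mathbf{x}\rhd\sigma=(x_{\sigma(1)},\dots,x_{\sigma(n)})$ and componentwise $\otimes$; unit $(id,(e,\dots,e))$; associator and unitors induced componentwise from those of $\mathbb G$ (trivial when $\mathbb G$ is strict). *)

theory Defs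
  imports "HOL-Algebra.Bij" "HOL-Combinatorics.Permutations"
begin

text \<open>A (small) groupoid/category given by a set of objects, a set of arrows,
  source, target, composition (cmp g f = g after f, defined when src g = tgt f)
  and identities.\<close>

record ('o, 'm) gpd =
  Obj  :: "'o set"
  Arr  :: "'m set"
  src  :: "'m \<Rightarrow> 'o"
  tgt  :: "'m \<Rightarrow> 'o"
  cmp  :: "'m \<Rightarrow> 'm \<Rightarrow> 'm"
  idm  :: "'o \<Rightarrow> 'm"

text \<open>Monoidal structure: tensor on objects, on arrows, and unit object.
  (All 2-groups occurring here are strict, so associators/unitors are identities.)\<close>

record ('o, 'm) mgpd = "('o, 'm) gpd" +
  tob   :: "'o \<Rightarrow> 'o \<Rightarrow> 'o"
  tar   :: "'m \<Rightarrow> 'm \<Rightarrow> 'm"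
  tunit :: "'o"

definition is_functor ::
  "('o, 'm, 'x) gpd_scheme \<Rightarrow> ('p, 'n, 'y) gpd_scheme \<Rightarrow> ('o \<Rightarrow> 'p) \<Rightarrow> ('m \<Rightarrow> 'n) \<Rightarrow> bool"
  where "is_functor C D Fo Fm \<longleftrightarrow>
     (\<forall>x\<in>Obj C. Fo x \<in> Obj D) \<and>
     (\<forall>f\<in>Arr C. Fm f \<in> Arr D \<and> src D (Fm f) = Fo (src C f) \<and> tgt D (Fm f) = Fo (tgt C f)) \<and>
     (\<forall>f\<in>Arr C. \<forall>g\<in>Arr C. src C g = tgt C f \<longrightarrow> Fm (cmp C g f) = cmp D (Fm g) (Fm f)) \<and>
     (\<forall>x\<in>Obj C. Fm (idm C x) = idm D (Fo x))"

definition is_iso_arr :: "('o, 'm, 'x) gpd_scheme \<Rightarrow> 'm \<Rightarrow> bool"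
  where "is_iso_arr C f \<longleftrightarrow> f \<in> Arr C \<and>
     (\<exists>g\<in>Arr C. src C g = tgt C f \<and> tgt C g = src C f \<and>
        cmp C g f = idm C (src C f) \<and> cmp C f g = idm C (tgt C f))"

definition nat_iso ::
  "('o, 'm, 'x) gpd_scheme \<Rightarrow> ('p, 'n, 'y) gpd_scheme \<Rightarrow> ('o \<Rightarrow> 'p) \<Rightarrow> ('m \<Rightarrow> 'n)
     \<Rightarrow> ('o \<Rightarrow> 'p) \<Rightarrow> ('m \<Rightarrow> 'n) \<Rightarrow> ('o \<Rightarrow> 'n) \<Rightarrow> bool"
  where "nat_iso C D Fo Fm Go Gm \<alpha> \<longleftrightarrow>
     (\<forall>x\<in>Obj C. \<alpha> x \<in> Arr D \<and> src D (\<alpha> x) = Fo x \<and> tgt D (\<alpha> x) = Go x \<and> is_iso_arr D (\<alpha> x)) \<and>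
     (\<forall>f\<in>Arr C. cmp D (\<alpha> (tgt C f)) (Fm f) = cmp D (Gm f) (\<alpha> (src C f)))"

definition is_self_equivalence :: "('o, 'm, 'x) gpd_scheme \<Rightarrow> ('o \<Rightarrow> 'o) \<Rightarrow> ('m \<Rightarrow> 'm) \<Rightarrow> bool"
  where "is_self_equivalence C Fo Fm \<longleftrightarrow> is_functor C C Fo Fm \<and>
     (\<exists>Ho Hm \<alpha> \<beta>. is_functor C C Ho Hm \<and>
        nat_iso C C (Ho \<circ> Fo) (Hm \<circ> Fm) id id \<alpha> \<and>
        nat_iso C C (Fo \<circ> Ho) (Fm \<circ> Hm) id id \<beta>)"

text \<open>Functors are represented extensionally (undefined off the objects/arrows),
  so that equal functors are equal as HOL values.\<close>
definition sym_obj :: "('o, 'm, 'x) gpd_scheme \<Rightarrow> (('o \<Rightarrow> 'o) \<times> ('m \<Rightarrow> 'm)) set"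
  where "sym_obj K = {(Fo, Fm). Fo \<in> extensional (Obj K) \<and> Fm \<in> extensional (Arr K) \<and>
                                 is_self_equivalence K Fo Fm}"

definition sym_tob :: "('o, 'm, 'x) gpd_scheme \<Rightarrow> ('o \<Rightarrow> 'o) \<times> ('m \<Rightarrow> 'm)
     \<Rightarrow> ('o \<Rightarrow> 'o) \<times> ('m \<Rightarrow> 'm) \<Rightarrow> ('o \<Rightarrow> 'o) \<times> ('m \<Rightarrow> 'm)"
  where "sym_tob K F F' = (compose (Obj K) (fst F) (fst F'), compose (Arr K) (snd F) (snd F'))"

text \<open>Arrows of Sym(K) are triples (F, alpha, G) with alpha : F \<Rightarrow> G a natural isomorphism.
  Tensor on arrows is horizontal composition:
  (alpha * beta)_x = alpha_(G' x) after F(beta_x).\<close>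
definition Sym :: "('o, 'm, 'x) gpd_scheme \<Rightarrow>
   (('o \<Rightarrow> 'o) \<times> ('m \<Rightarrow> 'm),
    (('o \<Rightarrow> 'o) \<times> ('m \<Rightarrow> 'm)) \<times> ('o \<Rightarrow> 'm) \<times> (('o \<Rightarrow> 'o) \<times> ('m \<Rightarrow> 'm))) mgpd"
  where "Sym K = \<lparr>
     Obj = sym_obj K,
     Arr = {(F, \<alpha>, G). F \<in> sym_obj K \<and> G \<in> sym_obj K \<and> \<alpha> \<in> extensional (Obj K) \<and>
                         nat_iso K K (fst F) (snd F) (fst G) (snd G) \<alpha>},
     src = (\<lambda>(F, \<alpha>, G). F),
     tgt = (\<lambda>(F, \<alpha>, G). G),
     cmp = (\<lambda>(F', \<beta>, G') (F, \<alpha>, G). (F, \<lambda>x\<in>Obj K. cmp K (\<beta> x) (\<alpha> x), G')),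
     idm = (\<lambda>F. (F, \<lambda>x\<in>Obj K. idm K (fst F x), F)),
     tob = sym_tob K,
     tar = (\<lambda>(F, \<alpha>, G) (F', \<beta>, G').
              (sym_tob K F F', \<lambda>x\<in>Obj K. cmp K (\<alpha> (fst G' x)) (snd F (\<beta> x)), sym_tob K G G')),
     tunit = (\<lambda>x\<in>Obj K. x, \<lambda>f\<in>Arr K. f) \<rparr>"

text \<open>Objects *_1, ..., *_n are the numbers 1..n; arrows *_i \<rightarrow> *_i are pairs (g, i), g in G;
  composition (g', i) after (g, i) = (g' g, i).\<close>
definition coprod :: "nat \<Rightarrow> ('g, 'b) monoid_scheme \<Rightarrow> (nat, 'g \<times> nat) gpd"
  where "coprod n G = \<lparr>
     Obj = {1..n},
     Arr = carrier G \<times> {1..n},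
     src = snd,
     tgt = snd,
     cmp = (\<lambda>(g', i) (g, j). (g' \<otimes>\<^bsub>G\<^esub> g, i)),
     idm = (\<lambda>i. (\<one>\<^bsub>G\<^esub>, i)) \<rparr>"

definition conj_aut :: "('g, 'b) monoid_scheme \<Rightarrow> 'g \<Rightarrow> ('g \<Rightarrow> 'g) \<Rightarrow> ('g \<Rightarrow> 'g)"
  where "conj_aut G g \<phi> = (\<lambda>x\<in>carrier G. g \<otimes>\<^bsub>G\<^esub> \<phi> x \<otimes>\<^bsub>G\<^esub> inv\<^bsub>G\<^esub> g)"

text \<open>Objects: automorphisms phi. An arrow phi \<rightarrow> c_g o phi is represented by the pair (phi, g).
  Composition g' after g = g' g; tensor phi (x) phi' = phi o phi', g (x) g' = g phi(g').\<close>
definition SymGrp :: "('g, 'b) monoid_scheme \<Rightarrow> ('g \<Rightarrow> 'g, ('g \<Rightarrow> 'g) \<times> 'g) mgpd"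
  where "SymGrp G = \<lparr>
     Obj = auto G,
     Arr = auto G \<times> carrier G,
     src = fst,
     tgt = (\<lambda>(\<phi>, g). conj_aut G g \<phi>),
     cmp = (\<lambda>(\<phi>', g') (\<phi>, g). (\<phi>, g' \<otimes>\<^bsub>G\<^esub> g)),
     idm = (\<lambda>\<phi>. (\<phi>, \<one>\<^bsub>G\<^esub>)),
     tob = (\<lambda>\<phi> \<phi>'. compose (carrier G) \<phi> \<phi>'),
     tar = (\<lambda>(\<phi>, g) (\<phi>', g'). (compose (carrier G) \<phi> \<phi>', g \<otimes>\<^bsub>G\<^esub> \<phi> g')),
     tunit = (\<lambda>x\<in>carrier G. x) \<rparr>"

text \<open>Permutations sigma in S_n are permutations of {1..n}; n-tuples are functions on {1..n}
  (extensional).\<close>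
definition wreath :: "nat \<Rightarrow> ('o, 'm, 'x) mgpd_scheme \<Rightarrow>
     ((nat \<Rightarrow> nat) \<times> (nat \<Rightarrow> 'o), (nat \<Rightarrow> nat) \<times> (nat \<Rightarrow> 'm)) mgpd"
  where "wreath n H = \<lparr>
     Obj = {(\<sigma>, xs). \<sigma> permutes {1..n} \<and> xs \<in> extensional {1..n} \<and> (\<forall>i\<in>{1..n}. xs i \<in> Obj H)},
     Arr = {(\<sigma>, fs). \<sigma> permutes {1..n} \<and> fs \<in> extensional {1..n} \<and> (\<forall>i\<in>{1..n}. fs i \<in> Arr H)},
     src = (\<lambda>(\<sigma>, fs). (\<sigma>, \<lambda>i\<in>{1..n}. src H (fs i))),
     tgt = (\<lambda>(\<sigma>, fs). (\<sigma>, \<lambda>i\<in>{1..n}. tgt H (fs i))),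
     cmp = (\<lambda>(\<sigma>, fs) (\<tau>, gs). (\<sigma>, \<lambda>i\<in>{1..n}. cmp H (fs i) (gs i))),
     idm = (\<lambda>(\<sigma>, xs). (\<sigma>, \<lambda>i\<in>{1..n}. idm H (xs i))),
     tob = (\<lambda>(\<sigma>, xs) (\<sigma>', xs'). (\<sigma> \<circ> \<sigma>', \<lambda>i\<in>{1..n}. tob H (xs (\<sigma>' i)) (xs' i))),
     tar = (\<lambda>(\<sigma>, fs) (\<sigma>', fs'). (\<sigma> \<circ> \<sigma>', \<lambda>i\<in>{1..n}. tar H (fs (\<sigma>' i)) (fs' i))),
     tunit = (id, \<lambda>i\<in>{1..n}. tunit H) \<rparr>"

definition strict_iso ::
  "('o, 'm, 'x) mgpd_scheme \<Rightarrow> ('p, 'n, 'y) mgpd_scheme \<Rightarrow> ('o \<Rightarrow> 'p) \<Rightarrow> ('m \<Rightarrow> 'n) \<Rightarrow> bool"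
  where "strict_iso A B Fo Fm \<longleftrightarrow>
     is_functor A B Fo Fm \<and>
     (\<exists>Go Gm. is_functor B A Go Gm \<and>
        (\<forall>x\<in>Obj A. Go (Fo x) = x) \<and> (\<forall>f\<in>Arr A. Gm (Fm f) = f) \<and>
        (\<forall>y\<in>Obj B. Fo (Go y) = y) \<and> (\<forall>g\<in>Arr B. Fm (Gm g) = g)) \<and>
     (\<forall>x\<in>Obj A. \<forall>y\<in>Obj A. Fo (tob A x y) = tob B (Fo x) (Fo y)) \<and>
     (\<forall>f\<in>Arr A. \<forall>g\<in>Arr A. Fm (tar A f g) = tar B (Fm f) (Fm g)) \<and>
     Fo (tunit A) = tunit B"

definition wr_to_sym_ob :: "nat \<Rightarrow> ('g, 'b) monoid_scheme \<Rightarrow>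
     (nat \<Rightarrow> nat) \<times> (nat \<Rightarrow> ('g \<Rightarrow> 'g)) \<Rightarrow> (nat \<Rightarrow> nat) \<times> ('g \<times> nat \<Rightarrow> 'g \<times> nat)"
  where "wr_to_sym_ob n G = (\<lambda>(\<sigma>, \<phi>s).
     (\<lambda>i\<in>{1..n}. \<sigma> i,
      restrict (\<lambda>(g, i). (\<phi>s i g, \<sigma> i)) (carrier G \<times> {1..n})))"

definition wr_to_sym_ar :: "nat \<Rightarrow> ('g, 'b) monoid_scheme \<Rightarrow>
     (nat \<Rightarrow> nat) \<times> (nat \<Rightarrow> ('g \<Rightarrow> 'g) \<times> 'g) \<Rightarrow>
     ((nat \<Rightarrow> nat) \<times> ('g \<times> nat \<Rightarrow> 'g \<times> nat)) \<times> (nat \<Rightarrow> 'g \<times> nat)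
       \<times> ((nat \<Rightarrow> nat) \<times> ('g \<times> nat \<Rightarrow> 'g \<times> nat))"
  where "wr_to_sym_ar n G = (\<lambda>(\<sigma>, fs).
     (wr_to_sym_ob n G (src (wreath n (SymGrp G)) (\<sigma>, fs)),
      \<lambda>i\<in>{1..n}. (snd (fs i), \<sigma> i),
      wr_to_sym_ob n G (tgt (wreath n (SymGrp G)) (\<sigma>, fs))))"

end

theory Submission
  imports Defs "HOL-Algebra.Group_Action"
begin

(* Write K for the coproduct of n copies of the one-object groupoid G, with objects 1..n.
   A functor K -> K sends the object i to some j = tau i and the automorphism group of
   *_i homomorphically into that of *_j, so it is determined by tau and a family of
   homomorphisms psi_i ("coprod_fun").  The map of the theorem sends (sigma, phi) to
   coprod_fun sigma phi.  The proof shows: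
   (1) coprod_fun sigma phi is a self-equivalence when sigma is a permutation and the phi_i
       are automorphisms; conversely every self-equivalence has this form, since a functor
       naturally isomorphic to the identity acts on each automorphism group by an inner
       automorphism (lemma nat_iso_to_identity).  This inverts the map on objects.
   (2) Natural isomorphisms coprod_fun sigma phi => coprod_fun sigma' phi' are exactly the
       families (g_i, *_(sigma i)) with sigma' = sigma and phi'_i = c_(g_i) o phi_i.  This
       inverts the map on arrows.
   (3) The map is a functor and preserves tensor products and unit; the interchange law of
       conjugation (conj_aut_compose) handles the tensor of arrows.
   A bijective functor whose inverse maps are well defined is automatically an isomorphism
   of groupoids (functor_inverse), which yields the strict isomorphism. *)

lemma wreath_simps:
  "Obj (wreath n H) = {(\<sigma>, xs). \<sigma> permutes {1..n} \<and> xs \<in> extensional {1..n} \<and> (\<forall>i\<in>{1..n}. xs i \<in> Obj H)}"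
  "Arr (wreath n H) = {(\<sigma>, fs). \<sigma> permutes {1..n} \<and> fs \<in> extensional {1..n} \<and> (\<forall>i\<in>{1..n}. fs i \<in> Arr H)}"
  "src (wreath n H) (\<sigma>, fs) = (\<sigma>, \<lambda>i\<in>{1..n}. src H (fs i))"
  "tgt (wreath n H) (\<sigma>, fs) = (\<sigma>, \<lambda>i\<in>{1..n}. tgt H (fs i))"
  "cmp (wreath n H) (\<sigma>, fs) (\<tau>, gs) = (\<sigma>, \<lambda>i\<in>{1..n}. cmp H (fs i) (gs i))"
  "idm (wreath n H) (\<sigma>, xs) = (\<sigma>, \<lambda>i\<in>{1..n}. idm H (xs i))"
  "tob (wreath n H) (\<sigma>, xs) (\<sigma>', xs') = (\<sigma> \<circ> \<sigma>', \<lambda>i\<in>{1..n}. tob H (xs (\<sigma>' i)) (xs' i))"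
  "tar (wreath n H) (\<sigma>, fs) (\<sigma>', fs') = (\<sigma> \<circ> \<sigma>', \<lambda>i\<in>{1..n}. tar H (fs (\<sigma>' i)) (fs' i))"
  "tunit (wreath n H) = (id, \<lambda>i\<in>{1..n}. tunit H)"
  by (simp_all add: wreath_def)

lemma SymGrp_simps:
  "Obj (SymGrp G) = auto G"
  "Arr (SymGrp G) = auto G \<times> carrier G"
  "src (SymGrp G) p = fst p"
  "tgt (SymGrp G) p = conj_aut G (snd p) (fst p)"
  "cmp (SymGrp G) p q = (fst q, snd p \<otimes>\<^bsub>G\<^esub> snd q)"
  "idm (SymGrp G) \<phi> = (\<phi>, \<one>\<^bsub>G\<^esub>)"
  "tob (SymGrp G) \<phi> \<phi>' = compose (carrier G) \<phi> \<phi>'"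
  "tar (SymGrp G) p q = (compose (carrier G) (fst p) (fst q), snd p \<otimes>\<^bsub>G\<^esub> fst p (snd q))"
  "tunit (SymGrp G) = (\<lambda>x\<in>carrier G. x)"
  by (simp_all add: SymGrp_def split: prod.splits)

lemma coprod_simps:
  "Obj (coprod n G) = {1..n}"
  "Arr (coprod n G) = carrier G \<times> {1..n}"
  "src (coprod n G) p = snd p"
  "tgt (coprod n G) p = snd p"
  "cmp (coprod n G) p q = (fst p \<otimes>\<^bsub>G\<^esub> fst q, snd p)"
  "idm (coprod n G) i = (\<one>\<^bsub>G\<^esub>, i)"
  by (simp_all add: coprod_def split: prod.splits)

lemma Sym_simps:
  "Obj (Sym K) = sym_obj K"
  "Arr (Sym K) = {(F, \<alpha>, G). F \<in> sym_obj K \<and> G \<in> sym_obj K \<and> \<alpha> \<in> extensional (Obj K) \<and>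
                         nat_iso K K (fst F) (snd F) (fst G) (snd G) \<alpha>}"
  "src (Sym K) (F, \<alpha>, G) = F"
  "tgt (Sym K) (F, \<alpha>, G) = G"
  "cmp (Sym K) (F', \<beta>, G') (F, \<alpha>, G) = (F, \<lambda>x\<in>Obj K. cmp K (\<beta> x) (\<alpha> x), G')"
  "idm (Sym K) F = (F, \<lambda>x\<in>Obj K. idm K (fst F x), F)"
  "tob (Sym K) = sym_tob K"
  "tar (Sym K) (F, \<alpha>, G) (F', \<beta>, G') =
     (sym_tob K F F', \<lambda>x\<in>Obj K. cmp K (\<alpha> (fst G' x)) (snd F (\<beta> x)), sym_tob K G G')"
  "tunit (Sym K) = (\<lambda>x\<in>Obj K. x, \<lambda>f\<in>Arr K. f)"
  by (simp_all add: Sym_def)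

lemma functor_inverse:
  assumes F: "is_functor A B Fo Fm"
    and Go_in: "\<And>y. y \<in> Obj B \<Longrightarrow> Go y \<in> Obj A" and Gm_in: "\<And>g. g \<in> Arr B \<Longrightarrow> Gm g \<in> Arr A"
    and Go_Fo: "\<And>x. x \<in> Obj A \<Longrightarrow> Go (Fo x) = x" and Fo_Go: "\<And>y. y \<in> Obj B \<Longrightarrow> Fo (Go y) = y"
    and Gm_Fm: "\<And>f. f \<in> Arr A \<Longrightarrow> Gm (Fm f) = f" and Fm_Gm: "\<And>g. g \<in> Arr B \<Longrightarrow> Fm (Gm g) = g"
    and src_in: "\<And>f. f \<in> Arr A \<Longrightarrow> src A f \<in> Obj A"
    and tgt_in: "\<And>f. f \<in> Arr A \<Longrightarrow> tgt A f \<in> Obj A"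
    and cmp_in: "\<And>f g. f \<in> Arr A \<Longrightarrow> g \<in> Arr A \<Longrightarrow> src A g = tgt A f \<Longrightarrow> cmp A g f \<in> Arr A"
    and idm_in: "\<And>x. x \<in> Obj A \<Longrightarrow> idm A x \<in> Arr A"
  shows "is_functor B A Go Gm"
proof -
  have src: "src A (Gm g) = Go (src B g)" if g: "g \<in> Arr B" for g
  proof -
    have "src B (Fm (Gm g)) = Fo (src A (Gm g))" using F Gm_in[OF g] unfolding is_functor_def by blast
    then have "src B g = Fo (src A (Gm g))" using Fm_Gm[OF g] by simp
    then show ?thesis using Go_Fo src_in Gm_in g by simp
  qed
  have tgt: "tgt A (Gm g) = Go (tgt B g)" if g: "g \<in> Arr B" for g
  proof -
    have "tgt B (Fm (Gm g)) = Fo (tgt A (Gm g))" using F Gm_in[OF g] unfolding is_functor_def by blast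
    then have "tgt B g = Fo (tgt A (Gm g))" using Fm_Gm[OF g] by simp
    then show ?thesis using Go_Fo tgt_in Gm_in g by simp
  qed
  have cmp: "Gm (cmp B g f) = cmp A (Gm g) (Gm f)"
    if f: "f \<in> Arr B" and g: "g \<in> Arr B" and fg: "src B g = tgt B f" for f g
  proof -
    have composable: "src A (Gm g) = tgt A (Gm f)" using src tgt f g fg by simp
    then have "Fm (cmp A (Gm g) (Gm f)) = cmp B g f"
      using F Gm_in f g Fm_Gm unfolding is_functor_def by metis
    then show ?thesis using Gm_Fm cmp_in Gm_in f g composable by metis
  qed
  have idm: "Gm (idm B y) = idm A (Go y)" if y: "y \<in> Obj B" for y
  proof -
    have "Fm (idm A (Go y)) = idm B y" using F Go_in[OF y] Fo_Go[OF y] unfolding is_functor_def by metis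
    then show ?thesis using Gm_Fm idm_in Go_in y by metis
  qed
  show ?thesis unfolding is_functor_def using Go_in Gm_in src tgt cmp idm by auto
qed

section \<open>Automorphisms and conjugation in a group\<close>

context group
begin

lemma inv_mult_cancel_left: "x \<in> carrier G \<Longrightarrow> y \<in> carrier G \<Longrightarrow> inv x \<otimes> (x \<otimes> y) = y"
  by (simp add: m_assoc[symmetric])

lemma auto_hom: "\<phi> \<in> auto G \<Longrightarrow> \<phi> \<in> hom G G"
  by (simp add: auto_def)

lemma auto_closed: "\<phi> \<in> auto G \<Longrightarrow> x \<in> carrier G \<Longrightarrow> \<phi> x \<in> carrier G"
  using hom_in_carrier[OF auto_hom] .

lemma auto_inv: "\<phi> \<in> auto G \<Longrightarrow> x \<in> carrier G \<Longrightarrow> \<phi> (inv x) = inv (\<phi> x)"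
  by (simp add: auto_hom group_hom.hom_inv group_hom_def group_hom_axioms_def is_group)

lemma auto_extensional: "\<phi> \<in> auto G \<Longrightarrow> \<phi> \<in> extensional (carrier G)"
  by (simp add: auto_def Bij_def)

lemma auto_compose: "\<phi> \<in> auto G \<Longrightarrow> \<psi> \<in> auto G \<Longrightarrow> compose (carrier G) \<phi> \<psi> \<in> auto G"
  by (simp add: auto_def hom_compose[of \<psi> G \<phi>] compose_Bij)

lemma auto_inverse:
  "\<phi> \<in> auto G \<Longrightarrow> restrict (inv_into (carrier G) \<phi>) (carrier G) \<in> auto G"
  by (simp add: auto_def restrict_inv_into_hom restrict_inv_into_Bij)

definition inner :: "'a \<Rightarrow> 'a \<Rightarrow> 'a"
  where "inner g = (\<lambda>h\<in>carrier G. g \<otimes> h \<otimes> inv g)"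

lemma inner_auto: "g \<in> carrier G \<Longrightarrow> inner g \<in> auto G"
proof -
  assume g: "g \<in> carrier G"
  have "inner g \<in> hom G G"
    by (rule homI) (use g in \<open>simp_all add: inner_def m_assoc inv_mult_cancel_left\<close>)
  moreover have "inner g \<in> Bij (carrier G)"
    using conjugation_is_bij[OF g] by (simp add: Bij_def inner_def)
  ultimately show ?thesis by (simp add: auto_def)
qed

lemma conj_aut_as_compose:
  assumes "\<And>x. x \<in> carrier G \<Longrightarrow> \<phi> x \<in> carrier G"
  shows "conj_aut G g \<phi> = compose (carrier G) (inner g) \<phi>"
  using assms by (auto simp: conj_aut_def compose_def inner_def)

lemma conj_aut_auto: "\<phi> \<in> auto G \<Longrightarrow> g \<in> carrier G \<Longrightarrow> conj_aut G g \<phi> \<in> auto G"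
  by (simp add: conj_aut_as_compose auto_closed auto_compose inner_auto)

lemma conj_aut_one:
  assumes "\<phi> \<in> auto G"
  shows "conj_aut G \<one> \<phi> = \<phi>"
proof (rule ext)
  fix x
  show "conj_aut G \<one> \<phi> x = \<phi> x"
    using assms extensional_arb[OF auto_extensional[OF assms], of x]
    by (cases "x \<in> carrier G") (simp_all add: conj_aut_def auto_closed)
qed

lemma conj_aut_mult:
  assumes "a \<in> carrier G" "b \<in> carrier G" "\<And>x. x \<in> carrier G \<Longrightarrow> \<phi> x \<in> carrier G"
  shows "conj_aut G (a \<otimes> b) \<phi> = conj_aut G a (conj_aut G b \<phi>)"
  using assms by (intro ext) (simp add: conj_aut_def m_assoc inv_mult_group)

text \<open>Interchange law in Sym(G): the tensor (g \<phi>(g')) of two arrows conjugates the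
  composite automorphism \<phi> \<circ> \<phi>' as the two arrows do separately.\<close>
lemma conj_aut_compose:
  assumes "\<phi> \<in> auto G" "\<phi>' \<in> auto G" "g \<in> carrier G" "g' \<in> carrier G"
  shows "conj_aut G (g \<otimes> \<phi> g') (compose (carrier G) \<phi> \<phi>') =
         compose (carrier G) (conj_aut G g \<phi>) (conj_aut G g' \<phi>')"
proof (rule ext)
  fix x
  show "conj_aut G (g \<otimes> \<phi> g') (compose (carrier G) \<phi> \<phi>') x =
        compose (carrier G) (conj_aut G g \<phi>) (conj_aut G g' \<phi>') x"
  proof (cases "x \<in> carrier G")
    case True
    let ?a = "\<phi> g'" and ?y = "\<phi> (\<phi>' x)"
    have c: "?a \<in> carrier G" "?y \<in> carrier G" "\<phi>' x \<in> carrier G"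
      using True assms by (simp_all add: auto_closed)
    have hom: "\<phi> (g' \<otimes> \<phi>' x \<otimes> inv g') = ?a \<otimes> ?y \<otimes> inv ?a"
      using True assms c by (simp add: hom_mult[OF auto_hom] auto_inv)
    have assoc: "g \<otimes> ?a \<otimes> ?y \<otimes> inv (g \<otimes> ?a) = g \<otimes> (?a \<otimes> ?y \<otimes> inv ?a) \<otimes> inv g"
      using assms c by (simp add: inv_mult_group m_assoc)
    have lhs: "conj_aut G (g \<otimes> ?a) (compose (carrier G) \<phi> \<phi>') x = g \<otimes> ?a \<otimes> ?y \<otimes> inv (g \<otimes> ?a)"
      using True by (simp add: conj_aut_def compose_def)
    have rhs: "compose (carrier G) (conj_aut G g \<phi>) (conj_aut G g' \<phi>') x
        = g \<otimes> \<phi> (g' \<otimes> \<phi>' x \<otimes> inv g') \<otimes> inv g"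
      using True assms c by (simp add: conj_aut_def compose_def)
    show ?thesis by (simp only: lhs rhs hom assoc)
  qed (simp add: conj_aut_def compose_def)
qed

end

section \<open>Functors of the coproduct groupoid\<close>

definition coprod_fun :: "nat \<Rightarrow> ('g, 'b) monoid_scheme \<Rightarrow> (nat \<Rightarrow> nat) \<Rightarrow> (nat \<Rightarrow> 'g \<Rightarrow> 'g)
    \<Rightarrow> (nat \<Rightarrow> nat) \<times> ('g \<times> nat \<Rightarrow> 'g \<times> nat)"
  where "coprod_fun n G \<tau> \<psi>s =
    (\<lambda>i\<in>{1..n}. \<tau> i, restrict (\<lambda>(g, i). (\<psi>s i g, \<tau> i)) (carrier G \<times> {1..n}))"

lemma wr_to_sym_ob_coprod_fun: "wr_to_sym_ob n G (\<sigma>, \<phi>s) = coprod_fun n G \<sigma> \<phi>s"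
  by (simp add: wr_to_sym_ob_def coprod_fun_def)

lemma coprod_fun_cong:
  assumes "\<And>i. i \<in> {1..n} \<Longrightarrow> \<tau> i = \<tau>' i"
    and "\<And>i g. i \<in> {1..n} \<Longrightarrow> g \<in> carrier G \<Longrightarrow> \<psi>s i g = \<psi>s' i g"
  shows "coprod_fun n G \<tau> \<psi>s = coprod_fun n G \<tau>' \<psi>s'"
  unfolding coprod_fun_def using assms by (auto intro!: restrict_ext)

definition coprod_component :: "('g, 'b) monoid_scheme \<Rightarrow> ('g \<times> nat \<Rightarrow> 'g \<times> nat) \<Rightarrow> nat \<Rightarrow> 'g \<Rightarrow> 'g"
  where "coprod_component G Fm i = (\<lambda>g\<in>carrier G. fst (Fm (g, i)))"

locale coprod_sym = group + fixes n :: nat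
begin

abbreviation K where "K \<equiv> coprod n G"

abbreviation W where "W \<equiv> wreath n (SymGrp G)"

abbreviation S where "S \<equiv> Sym K"

lemma coprod_iso_arr: "g \<in> carrier G \<Longrightarrow> i \<in> {1..n} \<Longrightarrow> is_iso_arr K (g, i)"
  unfolding is_iso_arr_def by (intro conjI bexI[of _ "(inv g, i)"]) (simp_all add: coprod_simps)

lemma coprod_fun_functor:
  assumes "\<And>i. i \<in> {1..n} \<Longrightarrow> \<tau> i \<in> {1..n}" and "\<And>i. i \<in> {1..n} \<Longrightarrow> \<psi>s i \<in> hom G G"
  shows "is_functor K K (fst (coprod_fun n G \<tau> \<psi>s)) (snd (coprod_fun n G \<tau> \<psi>s))"
proof -
  have "\<psi>s i g \<in> carrier G" if "i \<in> {1..n}" "g \<in> carrier G" for i g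
    using hom_in_carrier[OF assms(2)[OF that(1)] that(2)] .
  then show ?thesis
    unfolding is_functor_def coprod_fun_def coprod_simps
    using assms by (auto simp: hom_mult hom_one[OF _ is_group is_group])
qed

lemma nat_iso_unit:
  assumes "\<And>i. i \<in> {1..n} \<Longrightarrow> Po i = i" and "\<And>f. f \<in> Arr K \<Longrightarrow> Pm f = f"
  shows "nat_iso K K Po Pm id id (\<lambda>i. (\<one>, i))"
  unfolding nat_iso_def using assms coprod_iso_arr by (auto simp: coprod_simps)

lemma coprod_fun_left_inverse:
  assumes \<tau>_in: "\<And>i. i \<in> {1..n} \<Longrightarrow> \<tau> i \<in> {1..n}"
    and \<psi>_closed: "\<And>i g. i \<in> {1..n} \<Longrightarrow> g \<in> carrier G \<Longrightarrow> \<psi>s i g \<in> carrier G"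
    and inv_obj: "\<And>i. i \<in> {1..n} \<Longrightarrow> \<tau>' (\<tau> i) = i"
    and inv_arr: "\<And>i g. i \<in> {1..n} \<Longrightarrow> g \<in> carrier G \<Longrightarrow> \<psi>s' (\<tau> i) (\<psi>s i g) = g"
  shows "nat_iso K K (fst (coprod_fun n G \<tau>' \<psi>s') \<circ> fst (coprod_fun n G \<tau> \<psi>s))
           (snd (coprod_fun n G \<tau>' \<psi>s') \<circ> snd (coprod_fun n G \<tau> \<psi>s)) id id (\<lambda>i. (\<one>, i))"
proof (rule nat_iso_unit)
  show "(fst (coprod_fun n G \<tau>' \<psi>s') \<circ> fst (coprod_fun n G \<tau> \<psi>s)) i = i" if "i \<in> {1..n}" for i
    using that \<tau>_in inv_obj by (simp add: coprod_fun_def)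
  show "(snd (coprod_fun n G \<tau>' \<psi>s') \<circ> snd (coprod_fun n G \<tau> \<psi>s)) f = f" if arr: "f \<in> Arr K" for f
  proof -
    obtain g i where f: "f = (g, i)" "g \<in> carrier G" "i \<in> {1..n}"
      using arr by (auto simp: coprod_simps)
    then show ?thesis using \<psi>_closed \<tau>_in inv_obj inv_arr by (simp add: coprod_fun_def)
  qed
qed

lemma coprod_fun_self_equivalence:
  assumes \<tau>_in: "\<And>i. i \<in> {1..n} \<Longrightarrow> \<tau> i \<in> {1..n}" and \<psi>_hom: "\<And>i. i \<in> {1..n} \<Longrightarrow> \<psi>s i \<in> hom G G"
    and \<tau>'_in: "\<And>i. i \<in> {1..n} \<Longrightarrow> \<tau>' i \<in> {1..n}" and \<psi>'_hom: "\<And>i. i \<in> {1..n} \<Longrightarrow> \<psi>s' i \<in> hom G G"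
    and inv_left: "\<And>i. i \<in> {1..n} \<Longrightarrow> \<tau>' (\<tau> i) = i"
    and inv_right: "\<And>i. i \<in> {1..n} \<Longrightarrow> \<tau> (\<tau>' i) = i"
    and hom_inv_left: "\<And>i g. i \<in> {1..n} \<Longrightarrow> g \<in> carrier G \<Longrightarrow> \<psi>s' (\<tau> i) (\<psi>s i g) = g"
    and hom_inv_right: "\<And>i g. i \<in> {1..n} \<Longrightarrow> g \<in> carrier G \<Longrightarrow> \<psi>s (\<tau>' i) (\<psi>s' i g) = g"
  shows "is_self_equivalence K (fst (coprod_fun n G \<tau> \<psi>s)) (snd (coprod_fun n G \<tau> \<psi>s))"
proof -
  let ?F = "coprod_fun n G \<tau> \<psi>s" and ?H = "coprod_fun n G \<tau>' \<psi>s'"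
  have "nat_iso K K (fst ?H \<circ> fst ?F) (snd ?H \<circ> snd ?F) id id (\<lambda>i. (\<one>, i))"
    by (rule coprod_fun_left_inverse)
      (use \<tau>_in hom_in_carrier[OF \<psi>_hom] inv_left hom_inv_left in simp_all)
  moreover have "nat_iso K K (fst ?F \<circ> fst ?H) (snd ?F \<circ> snd ?H) id id (\<lambda>i. (\<one>, i))"
    by (rule coprod_fun_left_inverse)
      (use \<tau>'_in hom_in_carrier[OF \<psi>'_hom] inv_right hom_inv_right in simp_all)
  moreover have "is_functor K K (fst ?F) (snd ?F)"
    by (rule coprod_fun_functor) (fact \<tau>_in \<psi>_hom)+
  moreover have "is_functor K K (fst ?H) (snd ?H)"
    by (rule coprod_fun_functor) (fact \<tau>'_in \<psi>'_hom)+
  ultimately show ?thesis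
    unfolding is_self_equivalence_def by blast
qed

lemma coprod_fun_sym_obj:
  assumes \<sigma>: "\<sigma> permutes {1..n}" and \<phi>: "\<And>i. i \<in> {1..n} \<Longrightarrow> \<phi>s i \<in> auto G"
  shows "coprod_fun n G \<sigma> \<phi>s \<in> sym_obj K"
proof -
  define \<sigma>' where "\<sigma>' = inv_into UNIV \<sigma>"
  define \<psi>s' where "\<psi>s' = (\<lambda>i. restrict (inv_into (carrier G) (\<phi>s (\<sigma>' i))) (carrier G))"
  have \<sigma>_in: "\<And>i. i \<in> {1..n} \<Longrightarrow> \<sigma> i \<in> {1..n}" and \<sigma>'_in: "\<And>i. i \<in> {1..n} \<Longrightarrow> \<sigma>' i \<in> {1..n}"
    using permutes_in_image[OF \<sigma>] permutes_in_image[OF permutes_inv[OF \<sigma>]] by (auto simp: \<sigma>'_def)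
  have bij: "\<And>i. i \<in> {1..n} \<Longrightarrow> bij_betw (\<phi>s i) (carrier G) (carrier G)"
    using \<phi> by (simp add: auto_def Bij_def)
  have "is_self_equivalence K (fst (coprod_fun n G \<sigma> \<phi>s)) (snd (coprod_fun n G \<sigma> \<phi>s))"
  proof (rule coprod_fun_self_equivalence[where \<tau>' = \<sigma>' and \<psi>s' = \<psi>s'])
    show "\<psi>s' i \<in> hom G G" if "i \<in> {1..n}" for i
      using auto_inverse[OF \<phi>[OF \<sigma>'_in[OF that]]] by (simp add: \<psi>s'_def auto_def)
    show "\<psi>s' (\<sigma> i) (\<phi>s i g) = g" if "i \<in> {1..n}" "g \<in> carrier G" for i g
      using that bij[OF that(1)] auto_closed[OF \<phi>]
      by (simp add: \<psi>s'_def \<sigma>'_def permutes_inverses[OF \<sigma>] bij_betw_inv_into_left)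
    show "\<phi>s (\<sigma>' i) (\<psi>s' i g) = g" if "i \<in> {1..n}" "g \<in> carrier G" for i g
      using that bij[OF \<sigma>'_in[OF that(1)]] by (simp add: \<psi>s'_def bij_betw_inv_into_right)
    show "\<sigma>' (\<sigma> i) = i" "\<sigma> (\<sigma>' i) = i" for i
      by (simp_all add: \<sigma>'_def permutes_inverses[OF \<sigma>])
    show "\<phi>s i \<in> hom G G" if "i \<in> {1..n}" for i
      using auto_hom[OF \<phi>[OF that]] .
  qed (fact \<sigma>_in \<sigma>'_in)+
  then show ?thesis by (simp add: sym_obj_def coprod_fun_def coprod_simps)
qed

lemma coprod_functor_obj: "is_functor K K Fo Fm \<Longrightarrow> i \<in> {1..n} \<Longrightarrow> Fo i \<in> {1..n}"
  by (simp add: is_functor_def coprod_simps)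

lemma coprod_functor_arr:
  assumes "is_functor K K Fo Fm" "i \<in> {1..n}" "g \<in> carrier G"
  shows "Fm (g, i) = (coprod_component G Fm i g, Fo i)"
proof -
  have "Fm (g, i) \<in> Arr K" "snd (Fm (g, i)) = Fo i"
    using assms by (auto simp: is_functor_def coprod_simps)
  then show ?thesis using assms(3) by (simp add: coprod_component_def prod_eq_iff)
qed

lemma coprod_component_hom:
  assumes F: "is_functor K K Fo Fm" and i: "i \<in> {1..n}"
  shows "coprod_component G Fm i \<in> hom G G"
proof (rule homI)
  fix g h assume g: "g \<in> carrier G" and h: "h \<in> carrier G"
  have "Fm (g, i) \<in> Arr K" using F g i by (simp add: is_functor_def coprod_simps)
  then show "coprod_component G Fm i g \<in> carrier G"
    using g by (auto simp: coprod_component_def coprod_simps)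
  have "Fm (cmp K (g, i) (h, i)) = cmp K (Fm (g, i)) (Fm (h, i))"
    using F g h i unfolding is_functor_def by (simp add: coprod_simps)
  then show "coprod_component G Fm i (g \<otimes> h) = coprod_component G Fm i g \<otimes> coprod_component G Fm i h"
    using g h by (simp add: coprod_component_def coprod_simps)
qed

text \<open>A functor P naturally isomorphic to the identity fixes every object i and acts on its
  automorphisms by an inner automorphism (conjugation by the inverse of the component at i),
  in particular bijectively.\<close>
lemma nat_iso_to_identity:
  assumes \<alpha>: "nat_iso K K Po Pm id id \<alpha>" and i: "i \<in> {1..n}"
    and closed: "\<And>g. g \<in> carrier G \<Longrightarrow> fst (Pm (g, i)) \<in> carrier G"
  shows "Po i = i" and "bij_betw (\<lambda>g. fst (Pm (g, i))) (carrier G) (carrier G)"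
proof -
  let ?a = "fst (\<alpha> i)"
  have \<alpha>i: "\<alpha> i \<in> carrier G \<times> {1..n} \<and> snd (\<alpha> i) = Po i \<and> snd (\<alpha> i) = id i"
    using \<alpha> i unfolding nat_iso_def coprod_simps by blast
  then show "Po i = i" by simp
  have a: "?a \<in> carrier G" using \<alpha>i by auto
  have "fst (Pm (g, i)) = inner (inv ?a) g" if g: "g \<in> carrier G" for g
  proof -
    have "?a \<otimes> fst (Pm (g, i)) = g \<otimes> ?a"
      using \<alpha> i g unfolding nat_iso_def by (auto simp: coprod_simps)
    then have "inv ?a \<otimes> (g \<otimes> ?a) = fst (Pm (g, i))"
      using inv_solve_left'[of "fst (Pm (g, i))" ?a "g \<otimes> ?a"] a g closed[OF g] by simp
    then show ?thesis
      using a g by (simp add: inner_def m_assoc)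
  qed
  moreover have "bij_betw (inner (inv ?a)) (carrier G) (carrier G)"
    using inner_auto[of "inv ?a"] a by (simp add: auto_def Bij_def)
  ultimately show "bij_betw (\<lambda>g. fst (Pm (g, i))) (carrier G) (carrier G)"
    using bij_betw_cong[of "carrier G" "\<lambda>g. fst (Pm (g, i))" "inner (inv ?a)"] by blast
qed

lemma quasi_inverse_components:
  assumes F: "is_functor K K Fo Fm" and H: "is_functor K K Ho Hm"
    and \<alpha>: "nat_iso K K (Ho \<circ> Fo) (Hm \<circ> Fm) id id \<alpha>" and i: "i \<in> {1..n}"
  shows "Ho (Fo i) = i"
    and "bij_betw (\<lambda>g. coprod_component G Hm (Fo i) (coprod_component G Fm i g)) (carrier G) (carrier G)"
proof -
  let ?\<phi> = "coprod_component G Fm i" and ?\<psi> = "coprod_component G Hm (Fo i)"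
  have j: "Fo i \<in> {1..n}" using coprod_functor_obj[OF F i] .
  have \<phi>_closed: "?\<phi> g \<in> carrier G" if "g \<in> carrier G" for g
    using hom_in_carrier[OF coprod_component_hom[OF F i] that] .
  have composite: "fst ((Hm \<circ> Fm) (g, i)) = ?\<psi> (?\<phi> g)" if g: "g \<in> carrier G" for g
    using coprod_functor_arr[OF F i g] coprod_functor_arr[OF H j \<phi>_closed[OF g]] by simp
  have closed: "fst ((Hm \<circ> Fm) (g, i)) \<in> carrier G" if g: "g \<in> carrier G" for g
    using composite[OF g] hom_in_carrier[OF coprod_component_hom[OF H j] \<phi>_closed[OF g]] by simp
  show "Ho (Fo i) = i" using nat_iso_to_identity(1)[OF \<alpha> i closed] by simp
  have "bij_betw (\<lambda>g. ?\<psi> (?\<phi> g)) (carrier G) (carrier G) =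
        bij_betw (\<lambda>g. fst ((Hm \<circ> Fm) (g, i))) (carrier G) (carrier G)"
    by (rule bij_betw_cong) (simp only: composite)
  then show "bij_betw (\<lambda>g. ?\<psi> (?\<phi> g)) (carrier G) (carrier G)"
    using nat_iso_to_identity(2)[OF \<alpha> i closed] by simp
qed

lemma self_equivalence_on_objects:
  assumes "is_self_equivalence K Fo Fm"
  shows "bij_betw Fo {1..n} {1..n}"
proof -
  obtain Ho Hm \<alpha> \<beta> where F: "is_functor K K Fo Fm" and H: "is_functor K K Ho Hm"
    and \<alpha>: "nat_iso K K (Ho \<circ> Fo) (Hm \<circ> Fm) id id \<alpha>"
    and \<beta>: "nat_iso K K (Fo \<circ> Ho) (Fm \<circ> Hm) id id \<beta>"
    using assms unfolding is_self_equivalence_def by blast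
  have inverse: "Ho (Fo i) = i" "Fo (Ho i) = i" if "i \<in> {1..n}" for i
    using quasi_inverse_components(1)[OF F H \<alpha> that] quasi_inverse_components(1)[OF H F \<beta> that] .
  show ?thesis
    by (rule bij_betw_byWitness[where f' = Ho])
      (use inverse coprod_functor_obj[OF F] coprod_functor_obj[OF H] in blast)+
qed

text \<open>For a self-equivalence F with quasi-inverse H, the two composites H F and F H act
  bijectively on automorphism groups; hence F is injective and surjective on each of them.\<close>
lemma self_equivalence_component_auto:
  assumes "is_self_equivalence K Fo Fm" and i: "i \<in> {1..n}"
  shows "coprod_component G Fm i \<in> auto G"
proof -
  obtain Ho Hm \<alpha> \<beta> where F: "is_functor K K Fo Fm" and H: "is_functor K K Ho Hm"
    and \<alpha>: "nat_iso K K (Ho \<circ> Fo) (Hm \<circ> Fm) id id \<alpha>"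
    and \<beta>: "nat_iso K K (Fo \<circ> Ho) (Fm \<circ> Hm) id id \<beta>"
    using assms unfolding is_self_equivalence_def by blast
  let ?\<phi> = "coprod_component G Fm" and ?\<psi> = "coprod_component G Hm"
  define j where "j = Fo i"
  have j: "j \<in> {1..n}" using coprod_functor_obj[OF F i] by (simp add: j_def)
  have Ho_j: "Ho j = i" and bij_HF: "bij_betw (\<lambda>g. ?\<psi> j (?\<phi> i g)) (carrier G) (carrier G)"
    using quasi_inverse_components[OF F H \<alpha> i] by (simp_all add: j_def)
  have bij_FH: "bij_betw (\<lambda>g. ?\<phi> i (?\<psi> j g)) (carrier G) (carrier G)"
    using quasi_inverse_components(2)[OF H F \<beta> j] by (simp add: Ho_j)
  have "inj_on (?\<phi> i) (carrier G)"
    using bij_HF inj_on_imageI2[of "?\<psi> j" "?\<phi> i"] by (simp add: bij_betw_def comp_def)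
  moreover have "?\<phi> i ` carrier G = carrier G"
    using bij_FH hom_in_carrier[OF coprod_component_hom[OF F i]]
      hom_in_carrier[OF coprod_component_hom[OF H j]]
    unfolding bij_betw_def by blast
  ultimately have "?\<phi> i \<in> Bij (carrier G)"
    by (simp add: Bij_def bij_betw_def coprod_component_def)
  then show ?thesis
    using coprod_component_hom[OF F i] by (simp add: auto_def)
qed

end

section \<open>Inverting the comparison map on objects\<close>

definition sym_to_wr_ob :: "nat \<Rightarrow> ('g, 'b) monoid_scheme \<Rightarrow> (nat \<Rightarrow> nat) \<times> ('g \<times> nat \<Rightarrow> 'g \<times> nat)
    \<Rightarrow> (nat \<Rightarrow> nat) \<times> (nat \<Rightarrow> 'g \<Rightarrow> 'g)"
  where "sym_to_wr_ob n G F =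
    (\<lambda>i. if i \<in> {1..n} then fst F i else i, \<lambda>i\<in>{1..n}. coprod_component G (snd F) i)"

context coprod_sym
begin

lemma W_Obj: "(\<sigma>, \<phi>s) \<in> Obj W \<longleftrightarrow>
    \<sigma> permutes {1..n} \<and> \<phi>s \<in> extensional {1..n} \<and> (\<forall>i\<in>{1..n}. \<phi>s i \<in> auto G)"
  by (simp add: wreath_simps SymGrp_simps)

lemma W_Arr: "(\<sigma>, fs) \<in> Arr W \<longleftrightarrow> \<sigma> permutes {1..n} \<and> fs \<in> extensional {1..n} \<and>
    (\<forall>i\<in>{1..n}. fst (fs i) \<in> auto G \<and> snd (fs i) \<in> carrier G)"
  by (auto simp: wreath_simps SymGrp_simps mem_Times_iff)

lemma W_Arr_parts:
  assumes "(\<sigma>, fs) \<in> Arr W"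
  shows "\<sigma> permutes {1..n}" "fs \<in> extensional {1..n}"
    "\<And>i. i \<in> {1..n} \<Longrightarrow> fst (fs i) \<in> auto G" "\<And>i. i \<in> {1..n} \<Longrightarrow> snd (fs i) \<in> carrier G"
  using assms by (simp_all add: W_Arr)

lemma W_src: "src W (\<sigma>, fs) = (\<sigma>, \<lambda>i\<in>{1..n}. fst (fs i))"
  by (simp add: wreath_simps SymGrp_simps)

lemma W_tgt: "tgt W (\<sigma>, fs) = (\<sigma>, \<lambda>i\<in>{1..n}. conj_aut G (snd (fs i)) (fst (fs i)))"
  by (simp add: wreath_simps SymGrp_simps)

lemma W_cmp_closed: "f \<in> Arr W \<Longrightarrow> g \<in> Arr W \<Longrightarrow> cmp W g f \<in> Arr W"
  by (cases f, cases g) (auto simp: wreath_simps SymGrp_simps W_Arr mem_Times_iff)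

lemma W_idm_closed: "x \<in> Obj W \<Longrightarrow> idm W x \<in> Arr W"
  by (cases x) (simp add: wreath_simps SymGrp_simps W_Arr W_Obj)

lemma src_in_Obj: "f \<in> Arr W \<Longrightarrow> src W f \<in> Obj W"
  by (cases f) (simp add: W_src W_Obj W_Arr)

lemma tgt_in_Obj: "f \<in> Arr W \<Longrightarrow> tgt W f \<in> Obj W"
  by (cases f) (simp add: W_tgt W_Obj W_Arr conj_aut_auto)

lemma wr_to_sym_ob_in_Obj: "x \<in> Obj W \<Longrightarrow> wr_to_sym_ob n G x \<in> Obj S"
  using coprod_fun_sym_obj by (cases x) (auto simp: W_Obj wr_to_sym_ob_coprod_fun Sym_simps)

lemma sym_obj_decomposition:
  assumes "F \<in> sym_obj K"
  shows "sym_to_wr_ob n G F \<in> Obj W" and "wr_to_sym_ob n G (sym_to_wr_ob n G F) = F"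
proof -
  obtain Fo Fm where F_eq: "F = (Fo, Fm)" by (cases F)
  have ext: "Fo \<in> extensional {1..n}" "Fm \<in> extensional (carrier G \<times> {1..n})"
    and equiv: "is_self_equivalence K Fo Fm"
    using assms by (auto simp: F_eq sym_obj_def coprod_simps)
  have F_functor: "is_functor K K Fo Fm" using equiv by (simp add: is_self_equivalence_def)
  define \<sigma> where "\<sigma> = (\<lambda>i. if i \<in> {1..n} then Fo i else i)"
  define \<phi>s where "\<phi>s = (\<lambda>i\<in>{1..n}. coprod_component G Fm i)"
  have decomp: "sym_to_wr_ob n G F = (\<sigma>, \<phi>s)"
    unfolding sym_to_wr_ob_def F_eq \<sigma>_def \<phi>s_def fst_conv snd_conv ..
  have "bij_betw \<sigma> {1..n} {1..n}"
    using self_equivalence_on_objects[OF equiv] by (rule bij_betw_cong[THEN iffD1, rotated]) (simp add: \<sigma>_def)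
  then have "\<sigma> permutes {1..n}"
    by (rule bij_imp_permutes) (simp add: \<sigma>_def del: atLeastAtMost_iff)
  moreover have "\<forall>i\<in>{1..n}. \<phi>s i \<in> auto G"
    using self_equivalence_component_auto[OF equiv] by (simp add: \<phi>s_def)
  ultimately show "sym_to_wr_ob n G F \<in> Obj W"
    unfolding decomp W_Obj by (simp add: \<phi>s_def)
  have "restrict \<sigma> {1..n} = Fo"
    using extensional_restrict[OF ext(1)] by (metis \<sigma>_def restrict_ext)
  moreover have "restrict (\<lambda>(g, i). (\<phi>s i g, \<sigma> i)) (carrier G \<times> {1..n}) = Fm"
  proof -
    have "restrict (\<lambda>(g, i). (\<phi>s i g, \<sigma> i)) (carrier G \<times> {1..n}) = restrict Fm (carrier G \<times> {1..n})"
      by (rule restrict_ext) (auto simp: \<phi>s_def \<sigma>_def coprod_functor_arr[OF F_functor])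
    then show ?thesis using extensional_restrict[OF ext(2)] by simp
  qed
  ultimately have "wr_to_sym_ob n G (\<sigma>, \<phi>s) = (Fo, Fm)"
    unfolding wr_to_sym_ob_coprod_fun coprod_fun_def by simp
  then show "wr_to_sym_ob n G (sym_to_wr_ob n G F) = F"
    unfolding decomp by (simp add: F_eq)
qed

lemma sym_to_wr_ob_inverse:
  assumes "x \<in> Obj W"
  shows "sym_to_wr_ob n G (wr_to_sym_ob n G x) = x"
proof -
  obtain \<sigma> \<phi>s where x: "x = (\<sigma>, \<phi>s)" by (cases x)
  have \<sigma>: "\<sigma> permutes {1..n}" and ext: "\<phi>s \<in> extensional {1..n}" and aut: "\<forall>i\<in>{1..n}. \<phi>s i \<in> auto G"
    using assms by (simp_all add: x W_Obj)
  have "(\<lambda>i. if i \<in> {1..n} then fst (coprod_fun n G \<sigma> \<phi>s) i else i) = \<sigma>"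
    using permutes_not_in[OF \<sigma>] by (auto simp: coprod_fun_def)
  moreover have "coprod_component G (snd (coprod_fun n G \<sigma> \<phi>s)) i = \<phi>s i" if i: "i \<in> {1..n}" for i
  proof -
    have "coprod_component G (snd (coprod_fun n G \<sigma> \<phi>s)) i = restrict (\<phi>s i) (carrier G)"
      using i by (auto simp: coprod_component_def coprod_fun_def intro!: restrict_ext)
    then show ?thesis using extensional_restrict[OF auto_extensional] aut i by simp
  qed
  then have "(\<lambda>i\<in>{1..n}. coprod_component G (snd (coprod_fun n G \<sigma> \<phi>s)) i) = \<phi>s"
    using extensional_restrict[OF ext] restrict_ext[of "{1..n}"] by metis
  ultimately show ?thesis
    by (simp add: x wr_to_sym_ob_coprod_fun sym_to_wr_ob_def)
qed

end

section \<open>Inverting the comparison map on arrows\<close>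

definition sym_to_wr_ar :: "nat \<Rightarrow> ('g, 'b) monoid_scheme \<Rightarrow>
    ((nat \<Rightarrow> nat) \<times> ('g \<times> nat \<Rightarrow> 'g \<times> nat)) \<times> (nat \<Rightarrow> 'g \<times> nat) \<times> ((nat \<Rightarrow> nat) \<times> ('g \<times> nat \<Rightarrow> 'g \<times> nat))
    \<Rightarrow> (nat \<Rightarrow> nat) \<times> (nat \<Rightarrow> ('g \<Rightarrow> 'g) \<times> 'g)"
  where "sym_to_wr_ar n G = (\<lambda>(F, \<alpha>, F').
    (fst (sym_to_wr_ob n G F), \<lambda>i\<in>{1..n}. (snd (sym_to_wr_ob n G F) i, fst (\<alpha> i))))"

context coprod_sym
begin

lemma coprod_fun_nat_iso:
  assumes \<tau>_in: "\<And>i. i \<in> {1..n} \<Longrightarrow> \<tau> i \<in> {1..n}"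
    and \<psi>_closed: "\<And>i g. i \<in> {1..n} \<Longrightarrow> g \<in> carrier G \<Longrightarrow> \<psi>s i g \<in> carrier G"
    and gs: "\<And>i. i \<in> {1..n} \<Longrightarrow> gs i \<in> carrier G"
    and conj: "\<And>i g. i \<in> {1..n} \<Longrightarrow> g \<in> carrier G \<Longrightarrow> \<psi>s' i g = gs i \<otimes> \<psi>s i g \<otimes> inv (gs i)"
  shows "nat_iso K K (fst (coprod_fun n G \<tau> \<psi>s)) (snd (coprod_fun n G \<tau> \<psi>s))
           (fst (coprod_fun n G \<tau> \<psi>s')) (snd (coprod_fun n G \<tau> \<psi>s')) (\<lambda>i\<in>{1..n}. (gs i, \<tau> i))"
  unfolding nat_iso_def
proof (intro conjI ballI)
  fix i assume "i \<in> Obj K"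
  then have i: "i \<in> {1..n}" by (simp add: coprod_simps)
  then show "(\<lambda>i\<in>{1..n}. (gs i, \<tau> i)) i \<in> Arr K" "is_iso_arr K ((\<lambda>i\<in>{1..n}. (gs i, \<tau> i)) i)"
      "src K ((\<lambda>i\<in>{1..n}. (gs i, \<tau> i)) i) = fst (coprod_fun n G \<tau> \<psi>s) i"
      "tgt K ((\<lambda>i\<in>{1..n}. (gs i, \<tau> i)) i) = fst (coprod_fun n G \<tau> \<psi>s') i"
    using gs \<tau>_in coprod_iso_arr by (simp_all add: coprod_simps coprod_fun_def)
next
  fix f assume "f \<in> Arr K"
  then obtain g i where f: "f = (g, i)" and g: "g \<in> carrier G" and i: "i \<in> {1..n}"
    by (auto simp: coprod_simps)
  have "gs i \<otimes> \<psi>s i g = gs i \<otimes> \<psi>s i g \<otimes> inv (gs i) \<otimes> gs i"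
    using gs[OF i] \<psi>_closed[OF i g] by (simp add: m_assoc)
  then show "cmp K ((\<lambda>i\<in>{1..n}. (gs i, \<tau> i)) (tgt K f)) (snd (coprod_fun n G \<tau> \<psi>s) f) =
        cmp K (snd (coprod_fun n G \<tau> \<psi>s') f) ((\<lambda>i\<in>{1..n}. (gs i, \<tau> i)) (src K f))"
    using f g i conj[OF i g] by (simp add: coprod_simps coprod_fun_def)
qed

lemma coprod_fun_nat_iso_shape:
  assumes \<alpha>: "nat_iso K K (fst (coprod_fun n G \<tau> \<psi>s)) (snd (coprod_fun n G \<tau> \<psi>s))
                 (fst (coprod_fun n G \<tau>' \<psi>s')) (snd (coprod_fun n G \<tau>' \<psi>s')) \<alpha>"
    and \<psi>_closed: "\<And>g. g \<in> carrier G \<Longrightarrow> \<psi>s i g \<in> carrier G"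
    and \<psi>'_closed: "\<And>g. g \<in> carrier G \<Longrightarrow> \<psi>s' i g \<in> carrier G"
    and i: "i \<in> {1..n}"
  shows "\<alpha> i = (fst (\<alpha> i), \<tau> i)" and "fst (\<alpha> i) \<in> carrier G" and "\<tau>' i = \<tau> i"
    and "\<And>g. g \<in> carrier G \<Longrightarrow> \<psi>s' i g = fst (\<alpha> i) \<otimes> \<psi>s i g \<otimes> inv (fst (\<alpha> i))"
proof -
  let ?a = "fst (\<alpha> i)"
  have "\<alpha> i \<in> Arr K \<and> src K (\<alpha> i) = fst (coprod_fun n G \<tau> \<psi>s) i \<and>
      tgt K (\<alpha> i) = fst (coprod_fun n G \<tau>' \<psi>s') i"
    using \<alpha> i unfolding nat_iso_def coprod_simps by blast
  then have \<alpha>i: "\<alpha> i \<in> carrier G \<times> {1..n} \<and> snd (\<alpha> i) = \<tau> i \<and> snd (\<alpha> i) = \<tau>' i"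
    using i by (simp add: coprod_simps coprod_fun_def)
  then show "\<alpha> i = (?a, \<tau> i)" and a: "?a \<in> carrier G" and "\<tau>' i = \<tau> i"
    by (auto simp: prod_eq_iff)
  fix g assume g: "g \<in> carrier G"
  have "?a \<otimes> \<psi>s i g = \<psi>s' i g \<otimes> ?a"
    using \<alpha> i g unfolding nat_iso_def by (auto simp: coprod_simps coprod_fun_def)
  then show "\<psi>s' i g = ?a \<otimes> \<psi>s i g \<otimes> inv ?a"
    using a \<psi>_closed[OF g] \<psi>'_closed[OF g] by (simp add: inv_solve_right)
qed

lemma wr_to_sym_ar_eq: "wr_to_sym_ar n G (\<sigma>, fs) =
   (coprod_fun n G \<sigma> (\<lambda>i\<in>{1..n}. fst (fs i)), \<lambda>i\<in>{1..n}. (snd (fs i), \<sigma> i),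
    coprod_fun n G \<sigma> (\<lambda>i\<in>{1..n}. conj_aut G (snd (fs i)) (fst (fs i))))"
  by (simp add: wr_to_sym_ar_def W_src W_tgt wr_to_sym_ob_coprod_fun)

lemma wr_to_sym_ar_in_Arr:
  assumes f: "f \<in> Arr W"
  shows "wr_to_sym_ar n G f \<in> Arr S"
proof -
  obtain \<sigma> fs where f_eq: "f = (\<sigma>, fs)" by (cases f)
  note parts = W_Arr_parts[OF f[unfolded f_eq]]
  have "\<sigma> i \<in> {1..n}" if "i \<in> {1..n}" for i using permutes_in_image[OF parts(1)] that by simp
  moreover have "fst (fs i) g \<in> carrier G" if "i \<in> {1..n}" "g \<in> carrier G" for i g
    using auto_closed[OF parts(3)] that by simp
  ultimately have "nat_iso K K (fst (coprod_fun n G \<sigma> (\<lambda>i\<in>{1..n}. fst (fs i))))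
      (snd (coprod_fun n G \<sigma> (\<lambda>i\<in>{1..n}. fst (fs i))))
      (fst (coprod_fun n G \<sigma> (\<lambda>i\<in>{1..n}. conj_aut G (snd (fs i)) (fst (fs i)))))
      (snd (coprod_fun n G \<sigma> (\<lambda>i\<in>{1..n}. conj_aut G (snd (fs i)) (fst (fs i)))))
      (\<lambda>i\<in>{1..n}. (snd (fs i), \<sigma> i))"
    by (intro coprod_fun_nat_iso) (simp_all add: parts conj_aut_def)
  moreover have "wr_to_sym_ob n G (src W f) \<in> sym_obj K" "wr_to_sym_ob n G (tgt W f) \<in> sym_obj K"
    using wr_to_sym_ob_in_Obj src_in_Obj[OF f] tgt_in_Obj[OF f] by (simp_all add: Sym_simps)
  ultimately show ?thesis
    by (simp add: f_eq wr_to_sym_ar_eq Sym_simps coprod_simps W_src W_tgt wr_to_sym_ob_coprod_fun)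
qed

lemma sym_arr_decomposition:
  assumes a: "a \<in> Arr S"
  shows "sym_to_wr_ar n G a \<in> Arr W" and "wr_to_sym_ar n G (sym_to_wr_ar n G a) = a"
proof -
  obtain F \<alpha> F' where a_eq: "a = (F, \<alpha>, F')" by (cases a)
  have F: "F \<in> sym_obj K" and F': "F' \<in> sym_obj K" and \<alpha>_ext: "\<alpha> \<in> extensional {1..n}"
    and \<alpha>: "nat_iso K K (fst F) (snd F) (fst F') (snd F') \<alpha>"
    using a by (auto simp: a_eq Sym_simps coprod_simps)
  obtain \<sigma> \<phi>s where x: "sym_to_wr_ob n G F = (\<sigma>, \<phi>s)" by (cases "sym_to_wr_ob n G F")
  obtain \<sigma>' \<phi>s' where x': "sym_to_wr_ob n G F' = (\<sigma>', \<phi>s')" by (cases "sym_to_wr_ob n G F'")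
  have F_eq: "F = coprod_fun n G \<sigma> \<phi>s" and F'_eq: "F' = coprod_fun n G \<sigma>' \<phi>s'"
    using sym_obj_decomposition(2)[OF F] sym_obj_decomposition(2)[OF F']
    by (simp_all add: x x' wr_to_sym_ob_coprod_fun)
  have \<sigma>: "\<sigma> permutes {1..n}" and \<phi>s_ext: "\<phi>s \<in> extensional {1..n}"
    and \<phi>s: "\<And>i. i \<in> {1..n} \<Longrightarrow> \<phi>s i \<in> auto G" and \<phi>s': "\<And>i. i \<in> {1..n} \<Longrightarrow> \<phi>s' i \<in> auto G"
    using sym_obj_decomposition(1)[OF F] sym_obj_decomposition(1)[OF F'] by (simp_all add: x x' W_Obj)
  note shape = coprod_fun_nat_iso_shape[OF \<alpha>[unfolded F_eq F'_eq] auto_closed[OF \<phi>s] auto_closed[OF \<phi>s']]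
  have b: "sym_to_wr_ar n G (F, \<alpha>, F') = (\<sigma>, \<lambda>i\<in>{1..n}. (\<phi>s i, fst (\<alpha> i)))"
    by (simp add: sym_to_wr_ar_def x)
  show "sym_to_wr_ar n G a \<in> Arr W"
    unfolding a_eq b W_Arr using \<sigma> \<phi>s shape(2) by simp
  let ?fs = "\<lambda>i\<in>{1..n}. (\<phi>s i, fst (\<alpha> i))"
  have "coprod_fun n G \<sigma> (\<lambda>i\<in>{1..n}. fst (?fs i)) = F"
    unfolding F_eq by (rule coprod_fun_cong) simp_all
  moreover have "(\<lambda>i\<in>{1..n}. (snd (?fs i), \<sigma> i)) = \<alpha>"
  proof -
    have "(\<lambda>i\<in>{1..n}. (snd (?fs i), \<sigma> i)) = restrict \<alpha> {1..n}"
      using shape(1) by (auto intro: restrict_ext)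
    then show ?thesis using extensional_restrict[OF \<alpha>_ext] by simp
  qed
  moreover have "coprod_fun n G \<sigma> (\<lambda>i\<in>{1..n}. conj_aut G (snd (?fs i)) (fst (?fs i))) = F'"
    unfolding F'_eq using shape(3,4) by (intro coprod_fun_cong) (simp_all add: conj_aut_def)
  ultimately show "wr_to_sym_ar n G (sym_to_wr_ar n G a) = a"
    unfolding a_eq b wr_to_sym_ar_eq by (simp only:)
qed

lemma sym_to_wr_ar_inverse:
  assumes f: "f \<in> Arr W"
  shows "sym_to_wr_ar n G (wr_to_sym_ar n G f) = f"
proof -
  obtain \<sigma> fs where f_eq: "f = (\<sigma>, fs)" by (cases f)
  have "sym_to_wr_ob n G (coprod_fun n G \<sigma> (\<lambda>i\<in>{1..n}. fst (fs i))) = (\<sigma>, \<lambda>i\<in>{1..n}. fst (fs i))"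
    using sym_to_wr_ob_inverse[OF src_in_Obj[OF f]] by (simp add: f_eq W_src wr_to_sym_ob_coprod_fun)
  moreover have "(\<lambda>i\<in>{1..n}. ((\<lambda>i\<in>{1..n}. fst (fs i)) i, fst ((\<lambda>i\<in>{1..n}. (snd (fs i), \<sigma> i)) i)))
      = restrict fs {1..n}"
    by (rule restrict_ext) simp
  moreover have "restrict fs {1..n} = fs"
    using extensional_restrict[OF W_Arr_parts(2)[OF f[unfolded f_eq]]] .
  ultimately show ?thesis
    unfolding f_eq wr_to_sym_ar_eq sym_to_wr_ar_def by simp
qed

section \<open>Functoriality and strict monoidality\<close>

lemma wr_to_sym_ar_cmp:
  assumes f: "f \<in> Arr W" and g: "g \<in> Arr W" and composable: "src W g = tgt W f"
  shows "wr_to_sym_ar n G (cmp W g f) = cmp S (wr_to_sym_ar n G g) (wr_to_sym_ar n G f)"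
proof -
  obtain \<tau> fs where f_eq: "f = (\<tau>, fs)" by (cases f)
  obtain \<sigma> gs where g_eq: "g = (\<sigma>, gs)" by (cases g)
  note p = W_Arr_parts[OF f[unfolded f_eq]] and q = W_Arr_parts[OF g[unfolded g_eq]]
  have \<sigma>_eq: "\<sigma> = \<tau>" using composable by (simp add: f_eq g_eq W_src W_tgt)
  have gs_src: "fst (gs i) = conj_aut G (snd (fs i)) (fst (fs i))" if "i \<in> {1..n}" for i
  proof -
    have "(\<lambda>i\<in>{1..n}. fst (gs i)) = (\<lambda>i\<in>{1..n}. conj_aut G (snd (fs i)) (fst (fs i)))"
      using composable by (simp add: f_eq g_eq W_src W_tgt)
    from fun_cong[OF this, of i] show ?thesis using that by simp
  qed
  let ?hs = "\<lambda>i\<in>{1..n}. (fst (fs i), snd (gs i) \<otimes> snd (fs i))"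
  have src: "coprod_fun n G \<sigma> (\<lambda>i\<in>{1..n}. fst (?hs i)) = coprod_fun n G \<tau> (\<lambda>i\<in>{1..n}. fst (fs i))"
    by (intro coprod_fun_cong) (simp_all add: \<sigma>_eq)
  have arrow: "(\<lambda>i\<in>{1..n}. (snd (?hs i), \<sigma> i)) =
      (\<lambda>x\<in>Obj K. cmp K ((\<lambda>i\<in>{1..n}. (snd (gs i), \<sigma> i)) x) ((\<lambda>i\<in>{1..n}. (snd (fs i), \<tau> i)) x))"
    unfolding coprod_simps(1) by (rule restrict_ext) (simp add: coprod_simps \<sigma>_eq)
  have tgt: "coprod_fun n G \<sigma> (\<lambda>i\<in>{1..n}. conj_aut G (snd (?hs i)) (fst (?hs i))) =
        coprod_fun n G \<sigma> (\<lambda>i\<in>{1..n}. conj_aut G (snd (gs i)) (fst (gs i)))"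
    using gs_src conj_aut_mult[OF q(4) p(4) auto_closed[OF p(3)]] by (intro coprod_fun_cong) simp_all
  show ?thesis
    unfolding f_eq g_eq wreath_simps SymGrp_simps wr_to_sym_ar_eq Sym_simps
    by (simp only: src tgt arrow)
qed

lemma wr_to_sym_ar_idm:
  assumes x: "x \<in> Obj W"
  shows "wr_to_sym_ar n G (idm W x) = idm S (wr_to_sym_ob n G x)"
proof -
  obtain \<sigma> \<phi>s where x_eq: "x = (\<sigma>, \<phi>s)" by (cases x)
  have \<phi>s: "\<forall>i\<in>{1..n}. \<phi>s i \<in> auto G" using x by (simp add: x_eq W_Obj)
  have "coprod_fun n G \<sigma> (\<lambda>i\<in>{1..n}. fst ((\<lambda>i\<in>{1..n}. (\<phi>s i, \<one>)) i)) = coprod_fun n G \<sigma> \<phi>s"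
    by (rule coprod_fun_cong) simp_all
  moreover have "coprod_fun n G \<sigma> (\<lambda>i\<in>{1..n}. conj_aut G (snd ((\<lambda>i\<in>{1..n}. (\<phi>s i, \<one>)) i))
      (fst ((\<lambda>i\<in>{1..n}. (\<phi>s i, \<one>)) i))) = coprod_fun n G \<sigma> \<phi>s"
    using \<phi>s conj_aut_one by (intro coprod_fun_cong) simp_all
  moreover have "(\<lambda>i\<in>{1..n}. (snd ((\<lambda>i\<in>{1..n}. (\<phi>s i, \<one>)) i), \<sigma> i)) =
      (\<lambda>i\<in>Obj K. idm K (fst (coprod_fun n G \<sigma> \<phi>s) i))"
    unfolding coprod_simps(1) by (rule restrict_ext) (simp add: coprod_fun_def coprod_simps)
  ultimately show ?thesis
    unfolding x_eq wreath_simps SymGrp_simps wr_to_sym_ar_eq wr_to_sym_ob_coprod_fun Sym_simps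
    by (simp only:)
qed

lemma wr_to_sym_functor: "is_functor W S (wr_to_sym_ob n G) (wr_to_sym_ar n G)"
  unfolding is_functor_def
proof (intro conjI ballI impI)
  fix f assume f: "f \<in> Arr W"
  then show "wr_to_sym_ar n G f \<in> Arr S" by (rule wr_to_sym_ar_in_Arr)
  show "src S (wr_to_sym_ar n G f) = wr_to_sym_ob n G (src W f)"
    "tgt S (wr_to_sym_ar n G f) = wr_to_sym_ob n G (tgt W f)"
    by (simp_all add: wr_to_sym_ar_def Sym_simps split: prod.split)
qed (simp_all add: wr_to_sym_ob_in_Obj wr_to_sym_ar_cmp wr_to_sym_ar_idm)

lemma sym_to_wr_functor: "is_functor S W (sym_to_wr_ob n G) (sym_to_wr_ar n G)"
proof (rule functor_inverse[OF wr_to_sym_functor])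
  show "sym_to_wr_ob n G y \<in> Obj W" "wr_to_sym_ob n G (sym_to_wr_ob n G y) = y" if "y \<in> Obj S" for y
    using sym_obj_decomposition that by (simp_all add: Sym_simps)
  show "sym_to_wr_ar n G a \<in> Arr W" "wr_to_sym_ar n G (sym_to_wr_ar n G a) = a" if "a \<in> Arr S" for a
    using sym_arr_decomposition that by simp_all
qed (simp_all add: sym_to_wr_ob_inverse sym_to_wr_ar_inverse src_in_Obj tgt_in_Obj W_cmp_closed W_idm_closed)

lemma coprod_fun_tensor:
  assumes "\<And>i. i \<in> {1..n} \<Longrightarrow> \<tau>' i \<in> {1..n}"
    and "\<And>i g. i \<in> {1..n} \<Longrightarrow> g \<in> carrier G \<Longrightarrow> \<psi>s' i g \<in> carrier G"
  shows "sym_tob K (coprod_fun n G \<tau> \<psi>s) (coprod_fun n G \<tau>' \<psi>s') =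
         coprod_fun n G (\<tau> \<circ> \<tau>') (\<lambda>i. compose (carrier G) (\<psi>s (\<tau>' i)) (\<psi>s' i))"
  using assms
  by (auto simp: sym_tob_def coprod_fun_def coprod_simps compose_def intro!: restrict_ext)

lemma wr_to_sym_ob_tob:
  assumes x: "x \<in> Obj W" and y: "y \<in> Obj W"
  shows "wr_to_sym_ob n G (tob W x y) = tob S (wr_to_sym_ob n G x) (wr_to_sym_ob n G y)"
proof -
  obtain \<sigma> \<phi>s where x_eq: "x = (\<sigma>, \<phi>s)" by (cases x)
  obtain \<sigma>' \<psi>s where y_eq: "y = (\<sigma>', \<psi>s)" by (cases y)
  have \<sigma>': "\<sigma>' permutes {1..n}" and \<psi>s: "\<forall>i\<in>{1..n}. \<psi>s i \<in> auto G"
    using y by (simp_all add: y_eq W_Obj)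
  have \<sigma>'_in: "\<And>i. i \<in> {1..n} \<Longrightarrow> \<sigma>' i \<in> {1..n}" using permutes_in_image[OF \<sigma>'] by simp
  have "coprod_fun n G (\<sigma> \<circ> \<sigma>') (\<lambda>i\<in>{1..n}. compose (carrier G) (\<phi>s (\<sigma>' i)) (\<psi>s i)) =
        sym_tob K (coprod_fun n G \<sigma> \<phi>s) (coprod_fun n G \<sigma>' \<psi>s)"
    using \<sigma>'_in \<psi>s auto_closed by (subst coprod_fun_tensor) (auto intro: coprod_fun_cong)
  then show ?thesis
    by (simp add: x_eq y_eq wreath_simps SymGrp_simps wr_to_sym_ob_coprod_fun Sym_simps)
qed

lemma wr_to_sym_ob_tunit: "wr_to_sym_ob n G (tunit W) = tunit S"
proof -
  have "(\<lambda>i\<in>{1..n}. id i) = (\<lambda>x\<in>{1..n}. x)" by (rule restrict_ext) simp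
  moreover have "restrict (\<lambda>(g, i). ((\<lambda>i\<in>{1..n}. \<lambda>x\<in>carrier G. x) i g, id i)) (carrier G \<times> {1..n})
      = (\<lambda>f\<in>carrier G \<times> {1..n}. f)"
    by (rule restrict_ext) auto
  ultimately show ?thesis
    unfolding wreath_simps SymGrp_simps Sym_simps wr_to_sym_ob_coprod_fun coprod_fun_def coprod_simps
    by (simp only:)
qed

lemma wr_to_sym_ar_tar:
  assumes f: "f \<in> Arr W" and f': "f' \<in> Arr W"
  shows "wr_to_sym_ar n G (tar W f f') = tar S (wr_to_sym_ar n G f) (wr_to_sym_ar n G f')"
proof -
  obtain \<sigma> fs where f_eq: "f = (\<sigma>, fs)" by (cases f)
  obtain \<sigma>' fs' where f'_eq: "f' = (\<sigma>', fs')" by (cases f')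
  note p = W_Arr_parts[OF f[unfolded f_eq]] and p' = W_Arr_parts[OF f'[unfolded f'_eq]]
  have \<sigma>'_in: "\<And>i. i \<in> {1..n} \<Longrightarrow> \<sigma>' i \<in> {1..n}" using permutes_in_image[OF p'(1)] by simp
  let ?hs = "\<lambda>i\<in>{1..n}. (compose (carrier G) (fst (fs (\<sigma>' i))) (fst (fs' i)),
                          snd (fs (\<sigma>' i)) \<otimes> fst (fs (\<sigma>' i)) (snd (fs' i)))"
  have src: "coprod_fun n G (\<sigma> \<circ> \<sigma>') (\<lambda>i\<in>{1..n}. fst (?hs i)) =
      sym_tob K (coprod_fun n G \<sigma> (\<lambda>i\<in>{1..n}. fst (fs i))) (coprod_fun n G \<sigma>' (\<lambda>i\<in>{1..n}. fst (fs' i)))"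
  proof -
    have "sym_tob K (coprod_fun n G \<sigma> (\<lambda>i\<in>{1..n}. fst (fs i))) (coprod_fun n G \<sigma>' (\<lambda>i\<in>{1..n}. fst (fs' i)))
      = coprod_fun n G (\<sigma> \<circ> \<sigma>') (\<lambda>i. compose (carrier G) ((\<lambda>i\<in>{1..n}. fst (fs i)) (\<sigma>' i)) ((\<lambda>i\<in>{1..n}. fst (fs' i)) i))"
      using \<sigma>'_in auto_closed[OF p'(3)] by (intro coprod_fun_tensor) simp_all
    also have "\<dots> = coprod_fun n G (\<sigma> \<circ> \<sigma>') (\<lambda>i\<in>{1..n}. fst (?hs i))"
      using \<sigma>'_in by (intro coprod_fun_cong) simp_all
    finally show ?thesis by (rule sym)
  qed
  have tgt: "coprod_fun n G (\<sigma> \<circ> \<sigma>') (\<lambda>i\<in>{1..n}. conj_aut G (snd (?hs i)) (fst (?hs i))) =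
      sym_tob K (coprod_fun n G \<sigma> (\<lambda>i\<in>{1..n}. conj_aut G (snd (fs i)) (fst (fs i))))
        (coprod_fun n G \<sigma>' (\<lambda>i\<in>{1..n}. conj_aut G (snd (fs' i)) (fst (fs' i))))"
  proof -
    have "sym_tob K (coprod_fun n G \<sigma> (\<lambda>i\<in>{1..n}. conj_aut G (snd (fs i)) (fst (fs i))))
        (coprod_fun n G \<sigma>' (\<lambda>i\<in>{1..n}. conj_aut G (snd (fs' i)) (fst (fs' i)))) =
      coprod_fun n G (\<sigma> \<circ> \<sigma>') (\<lambda>i. compose (carrier G)
        ((\<lambda>i\<in>{1..n}. conj_aut G (snd (fs i)) (fst (fs i))) (\<sigma>' i))
        ((\<lambda>i\<in>{1..n}. conj_aut G (snd (fs' i)) (fst (fs' i))) i))"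
      using \<sigma>'_in auto_closed[OF conj_aut_auto[OF p'(3) p'(4)]] by (intro coprod_fun_tensor) simp_all
    also have "\<dots> = coprod_fun n G (\<sigma> \<circ> \<sigma>') (\<lambda>i\<in>{1..n}. conj_aut G (snd (?hs i)) (fst (?hs i)))"
      using \<sigma>'_in p(3,4) p'(3,4) conj_aut_compose by (intro coprod_fun_cong) simp_all
    finally show ?thesis by (rule sym)
  qed
  have arrow: "(\<lambda>i\<in>{1..n}. (snd (?hs i), (\<sigma> \<circ> \<sigma>') i)) =
      (\<lambda>x\<in>Obj K. cmp K ((\<lambda>i\<in>{1..n}. (snd (fs i), \<sigma> i)) (fst (coprod_fun n G \<sigma>'
            (\<lambda>i\<in>{1..n}. conj_aut G (snd (fs' i)) (fst (fs' i)))) x))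
         (snd (coprod_fun n G \<sigma> (\<lambda>i\<in>{1..n}. fst (fs i))) ((\<lambda>i\<in>{1..n}. (snd (fs' i), \<sigma>' i)) x)))"
    unfolding coprod_simps(1)
    using \<sigma>'_in p'(4) by (intro restrict_ext) (simp add: coprod_simps coprod_fun_def)
  show ?thesis
    unfolding f_eq f'_eq wreath_simps SymGrp_simps wr_to_sym_ar_eq Sym_simps
    by (simp only: src tgt arrow)
qed

end

theorem proposition4p13:
  fixes n :: nat and G :: "('g, 'b) monoid_scheme"
  assumes "n \<ge> 1" and "group G"
  shows "strict_iso (wreath n (SymGrp G)) (Sym (coprod n G)) (wr_to_sym_ob n G) (wr_to_sym_ar n G)"
proof -
  interpret coprod_sym G n by (rule coprod_sym.intro) (rule assms(2))
  have inverse: "\<exists>Go Gm. is_functor S W Go Gm \<and>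
      (\<forall>x\<in>Obj W. Go (wr_to_sym_ob n G x) = x) \<and> (\<forall>f\<in>Arr W. Gm (wr_to_sym_ar n G f) = f) \<and>
      (\<forall>y\<in>Obj S. wr_to_sym_ob n G (Go y) = y) \<and> (\<forall>a\<in>Arr S. wr_to_sym_ar n G (Gm a) = a)"
  proof (intro exI conjI ballI)
    show "is_functor S W (sym_to_wr_ob n G) (sym_to_wr_ar n G)" by (rule sym_to_wr_functor)
  qed (simp_all add: sym_to_wr_ob_inverse sym_to_wr_ar_inverse sym_arr_decomposition
         sym_obj_decomposition Sym_simps)
  show ?thesis
    unfolding strict_iso_def
    using wr_to_sym_functor inverse wr_to_sym_ob_tob wr_to_sym_ar_tar wr_to_sym_ob_tunit by blast
qed

end
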